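(* Let $\mathcal{L}=\{S_1,\dots,S_k\}$ be a finite list of integer compositions (finite words over the alphabet of positive integers) such that no word on the list is contained as a subword (block of consecutive letters) in any other word of the list. Suppose further that all correlation polynomials $c_{ij}(x,q)=c_{S_iS_j}(x,q)$ with $i\neq j$ vanish identically. Let \[F(x,q)=\sum_{\sigma}x^{w(\sigma)}q^{\ell(\sigma)},\] the sum being extended over all compositions $\sigma$ of all nonnegative integers (including the empty composition) that avoid every word of $\mathcal{L}$ as a subword, where $\ell(\sigma)$ is the number of parts of $\sigma$ and $w(\sigma)$ is the sum of the parts of $\sigma$. Then, as formal power series, \[F(x,q)=\frac{1}{1-\frac{qx}{1-x}+\sum_{j=1}^{k}\frac{x^{w(S_j)}q^{\ell(S_j)}}{c_{jj}(x,q)}}.\]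
   Context: A composition is regarded as a word $a_1a_2\cdots a_m$ over the alphabet of positive integers; the weight of a letter $u$ is $w(u)=u$ and the weight $w$ of a word is the sum of the weights of its letters; the length $\ell$ is the number of letters. A word $\sigma$ contains $S$ as a subword if $S$ occurs as a block of consecutive letters of $\sigma$; $\sigma$ avoids $S$ otherwise. Correlation: for words $X=a_0a_1\cdots a_{m-1}$ (of length $m$) and $Y$, and $0\le j\le m-1$, put $c_j=1$ if $Y$ has length at least $m-j$ and the prefix $a_0\cdots a_{m-1-j}$ of $X$ equals the suffix of $Y$ of length $m-j$ (i.e. after aligning right ends and shifting $Y$ $j$ places to the left, the overlapping parts agree), and $c_j=0$ otherwise. The correlation polynomial of $X$ on $Y$ is \[c_{XY}(x,q)=c_0+c_1x^{w(a_{m-1})}q+c_2x^{w(a_{m-2}a_{m-1})}q^2+\dots+c_{m-1}x^{w(a_1a_2\cdots a_{m-1})}q^{m-1},\] i.e. $c_{XY}(x,q)=\sum_{j=0}^{m-1}c_j\,x^{w(a_{m-j}\cdots a_{m-1})}q^{j}$. We write $c_{ij}(x,q)=c_{S_iS_j}(x,q)$. *)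

theory Defs
  imports "HOL-Computational_Algebra.Formal_Power_Series" "HOL-Library.Sublist"
begin

text \<open>Bivariate formal power series in x and q are modelled as power series in x
  whose coefficients are power series in q: type real fps fps.\<close>

definition xv :: "real fps fps" where
  "xv = fps_X"

definition qv :: "real fps fps" where
  "qv = fps_const fps_X"

definition xq :: "nat \<Rightarrow> nat \<Rightarrow> real fps fps" where
  "xq w l = xv ^ w * qv ^ l"

definition is_comp :: "nat list \<Rightarrow> bool" where
  "is_comp \<sigma> \<longleftrightarrow> (\<forall>a\<in>set \<sigma>. 0 < a)"

definition wt :: "nat list \<Rightarrow> nat" where
  "wt \<sigma> = sum_list \<sigma>"

text \<open>Correlation polynomial c_{XY}(x,q) = sum_{j<m} c_j x^{w(a_{m-j} ... a_{m-1})} q^j, where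
  c_j = 1 iff |Y| >= m-j and the prefix of X of length m-j equals the suffix of Y of length m-j.\<close>
definition corr :: "nat list \<Rightarrow> nat list \<Rightarrow> real fps fps" where
  "corr X Y = (\<Sum>j<length X.
      if length X - j \<le> length Y \<and>
         take (length X - j) X = drop (length Y - (length X - j)) Y
      then xq (wt (drop (length X - j) X)) j else 0)"

definition avoids_all :: "(nat \<Rightarrow> nat list) \<Rightarrow> nat \<Rightarrow> nat list \<Rightarrow> bool" where
  "avoids_all S k \<sigma> \<longleftrightarrow> (\<forall>i\<in>{1..k}. \<not> sublist (S i) \<sigma>)"

definition avoid_gf :: "(nat \<Rightarrow> nat list) \<Rightarrow> nat \<Rightarrow> real fps fps" where
  "avoid_gf S k = Abs_fps (\<lambda>n. Abs_fps (\<lambda>m. of_nat (card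
      {\<sigma>. is_comp \<sigma> \<and> wt \<sigma> = n \<and> length \<sigma> = m \<and> avoids_all S k \<sigma>})))"

end

theory Submission
  imports Defs "HOL-Library.Disjoint_Sets"
begin

text \<open>Let \<open>F\<close> count the words avoiding every \<open>S\<^sub>j\<close>, and \<open>G\<^sub>j\<close> the words whose only
  occurrence of a forbidden word is a copy of \<open>S\<^sub>j\<close> at the very end. Appending a letter to an
  avoiding word gives either an avoiding word or a word of exactly one \<open>G\<^sub>j\<close>, whence
  \<open>1 + F \<cdot> qx/(1-x) = F + \<Sum>\<^sub>j G\<^sub>j\<close>. Appending \<open>S\<^sub>j\<close> itself to an avoiding word, the first
  forbidden occurrence must end inside the appended copy; since the list is reduced and its
  cross-correlations vanish, that occurrence is again \<open>S\<^sub>j\<close>, overlapping the copy in a border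
  of \<open>S\<^sub>j\<close>. This factorisation is unique and gives \<open>F \<cdot> x\<^bsup>w(S\<^sub>j)\<^esup>q\<^bsup>\<ell>(S\<^sub>j)\<^esup> = G\<^sub>j \<cdot> c\<^sub>j\<^sub>j\<close>.
  Eliminating the \<open>G\<^sub>j\<close> yields the formula.\<close>

unbundle fps_syntax

lemma mult_inverse_fps_eq_1:
  fixes f :: "'a::{ring_1, inverse} fps"
  assumes "f $ 0 * inverse (f $ 0) = 1"
  shows "f * inverse f = 1"
  unfolding fps_inverse_def using fps_right_inverse[OF assms] .

lemma inverse_fps_unique:
  fixes f g :: "'a::{comm_ring_1, inverse} fps"
  assumes "f * g = 1" "g $ 0 * inverse (g $ 0) = 1"
  shows "f = inverse g"
proof -
  have "f = f * (g * inverse g)" using mult_inverse_fps_eq_1[OF assms(2)] by simp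
  also have "\<dots> = inverse g" using assms(1) by (simp add: mult.assoc[symmetric])
  finally show ?thesis .
qed

lemma xq_nth_nth: "xq w l $ n $ m = (if n = w \<and> m = l then 1 else 0)"
proof -
  have "xq w l = fps_X ^ w * fps_const (fps_X ^ l)"
    by (simp add: xq_def xv_def qv_def fps_const_power)
  then show ?thesis by (simp add: fps_X_power_mult_nth)
qed

lemma xq_nth_0: "0 < w \<Longrightarrow> xq w l $ 0 = 0"
  by (intro fps_ext) (simp add: xq_nth_nth)

lemma is_comp_append [simp]: "is_comp (xs @ ys) \<longleftrightarrow> is_comp xs \<and> is_comp ys"
  by (auto simp: is_comp_def)

lemma wt_pos: "is_comp s \<Longrightarrow> s \<noteq> [] \<Longrightarrow> 0 < wt s"
  by (cases s) (auto simp: is_comp_def wt_def)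

lemma finite_comps_of_weight: "finite {s. is_comp s \<and> wt s = n}"
proof (rule finite_subset)
  show "{s. is_comp s \<and> wt s = n} \<subseteq> {xs. set xs \<subseteq> {0..n} \<and> length xs \<le> n}"
  proof safe
    fix s assume "is_comp s"
    then show "length s \<le> wt s"
      unfolding is_comp_def wt_def by (induction s) (auto simp: Suc_le_eq)
    show "x \<in> {0..wt s}" if "x \<in> set s" for x
      using that unfolding wt_def by (simp add: member_le_sum_list)
  qed
  show "finite {xs. set xs \<subseteq> {0..n} \<and> length xs \<le> n}"
    by (rule finite_lists_length_le) simp
qed

lemma finite_weight_slice: "A \<subseteq> Collect is_comp \<Longrightarrow> finite {s\<in>A. wt s = n \<and> P s}"
  by (rule finite_subset[OF _ finite_comps_of_weight[of n]]) auto

definition word_gf :: "nat list set \<Rightarrow> real fps fps" where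
  "word_gf A = Abs_fps (\<lambda>n. Abs_fps (\<lambda>m. of_nat (card {s\<in>A. wt s = n \<and> length s = m})))"

lemma word_gf_nth_nth [simp]:
  "word_gf A $ n $ m = of_nat (card {s\<in>A. wt s = n \<and> length s = m})"
  by (simp add: word_gf_def)

lemma word_gf_finite: "finite A \<Longrightarrow> word_gf A = (\<Sum>s\<in>A. xq (wt s) (length s))"
proof (intro fps_ext)
  fix n m assume "finite A"
  then have "(\<Sum>s\<in>A. xq (wt s) (length s)) $ n $ m = of_nat (card {s\<in>A. wt s = n \<and> length s = m})"
    by (simp add: fps_sum_nth xq_nth_nth eq_commute sum.If_cases Int_def conj_commute)
  then show "word_gf A $ n $ m = (\<Sum>s\<in>A. xq (wt s) (length s)) $ n $ m"
    by simp
qed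

lemma word_gf_Un:
  assumes "A \<subseteq> Collect is_comp" "B \<subseteq> Collect is_comp" "A \<inter> B = {}"
  shows "word_gf (A \<union> B) = word_gf A + word_gf B"
proof (intro fps_ext)
  fix n m
  have "{s\<in>A \<union> B. wt s = n \<and> length s = m} =
        {s\<in>A. wt s = n \<and> length s = m} \<union> {s\<in>B. wt s = n \<and> length s = m}"
    by auto
  moreover have "card \<dots> = card {s\<in>A. wt s = n \<and> length s = m} + card {s\<in>B. wt s = n \<and> length s = m}"
    using assms by (intro card_Un_disjoint finite_weight_slice) auto
  ultimately show "word_gf (A \<union> B) $ n $ m = (word_gf A + word_gf B) $ n $ m"
    by simp
qed

lemma word_gf_UN:
  assumes "finite I" "\<And>i. i \<in> I \<Longrightarrow> A i \<subseteq> Collect is_comp" "disjoint_family_on A I"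
  shows "word_gf (\<Union>i\<in>I. A i) = (\<Sum>i\<in>I. word_gf (A i))"
proof (intro fps_ext)
  fix n m
  have "{s\<in>(\<Union>i\<in>I. A i). wt s = n \<and> length s = m} = (\<Union>i\<in>I. {s\<in>A i. wt s = n \<and> length s = m})"
    by blast
  moreover have "card \<dots> = (\<Sum>i\<in>I. card {s\<in>A i. wt s = n \<and> length s = m})"
  proof (rule card_UN_disjoint)
    show "\<forall>i\<in>I. finite {s\<in>A i. wt s = n \<and> length s = m}"
      using assms(2) by (intro ballI finite_weight_slice) auto
    show "\<forall>i\<in>I. \<forall>j\<in>I. i \<noteq> j \<longrightarrow>
        {s\<in>A i. wt s = n \<and> length s = m} \<inter> {s\<in>A j. wt s = n \<and> length s = m} = {}"
      using assms(3) by (auto simp: disjoint_family_on_def)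
  qed (rule assms(1))
  ultimately show "word_gf (\<Union>i\<in>I. A i) $ n $ m = (\<Sum>i\<in>I. word_gf (A i)) $ n $ m"
    by (simp add: fps_sum_nth)
qed

lemma word_gf_nth_0:
  assumes "A \<subseteq> Collect is_comp" "[] \<in> A"
  shows "word_gf A $ 0 = 1"
proof (intro fps_ext)
  fix m
  have "s = []" if "s \<in> A" "wt s = 0" for s
    using wt_pos[of s] that assms(1) by auto
  then have "{s\<in>A. wt s = 0 \<and> length s = m} = (if m = 0 then {[]} else {})"
    using assms(2) by (auto simp: wt_def)
  then show "word_gf A $ 0 $ m = 1 $ m" by simp
qed

definition conc :: "'a list set \<Rightarrow> 'a list set \<Rightarrow> 'a list set" where
  "conc A B = (\<lambda>(a, b). a @ b) ` (A \<times> B)"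

lemma conc_iff: "w \<in> conc A B \<longleftrightarrow> (\<exists>a\<in>A. \<exists>b\<in>B. w = a @ b)"
  by (auto simp: conc_def)

lemma inj_on_append_prefix_free:
  assumes "\<And>a a'. a \<in> A \<Longrightarrow> a' \<in> A \<Longrightarrow> prefix a a' \<Longrightarrow> a = a'"
  shows "inj_on (\<lambda>(a, b). a @ b) (A \<times> B)"
proof (rule inj_onI, clarify)
  fix a b a' b' assume "a \<in> A" "a' \<in> A" "a @ b = a' @ b'"
  moreover from \<open>a @ b = a' @ b'\<close> have "prefix a a' \<or> prefix a' a"
    by (metis prefix_same_cases prefixI)
  ultimately have "a = a'" using assms by blast
  with \<open>a @ b = a' @ b'\<close> show "a = a' \<and> b = b'" by simp
qed

lemma inj_on_append_const_length:
  assumes "\<And>b. b \<in> B \<Longrightarrow> length b = l"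
  shows "inj_on (\<lambda>(a, b). a @ b) (A \<times> B)"
proof (rule inj_onI, clarify)
  fix a b a' b' assume "b \<in> B" "b' \<in> B" "a @ b = a' @ b'"
  moreover from \<open>b \<in> B\<close> \<open>b' \<in> B\<close> have "length b = length b'" using assms by simp
  ultimately show "a = a' \<and> b = b'" using append_eq_append_conv by blast
qed

lemma word_gf_conc:
  assumes A: "A \<subseteq> Collect is_comp" and B: "B \<subseteq> Collect is_comp"
    and inj: "inj_on (\<lambda>(a, b). a @ b) (A \<times> B)"
  shows "word_gf (conc A B) = word_gf A * word_gf B"
proof (intro fps_ext)
  fix n m
  define Ac where "Ac i j = {a\<in>A. wt a = i \<and> length a = j}" for i j
  define Bc where "Bc i j = {b\<in>B. wt b = i \<and> length b = j}" for i j
  define P where "P = {p\<in>A \<times> B. wt (fst p) + wt (snd p) = n \<and> length (fst p) + length (snd p) = m}"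
  have finA: "finite (Ac i j)" for i j unfolding Ac_def by (rule finite_weight_slice[OF A])
  have finB: "finite (Bc i j)" for i j unfolding Bc_def by (rule finite_weight_slice[OF B])
  have "{s\<in>conc A B. wt s = n \<and> length s = m} = (\<lambda>(a, b). a @ b) ` P"
    by (auto simp: conc_def P_def wt_def)
  moreover have "inj_on (\<lambda>(a, b). a @ b) P"
    by (rule inj_on_subset[OF inj]) (auto simp: P_def)
  ultimately have "card {s\<in>conc A B. wt s = n \<and> length s = m} = card P"
    by (simp add: card_image)
  also have "P = (\<Union>i\<in>{0..n}. \<Union>j\<in>{0..m}. Ac i j \<times> Bc (n - i) (m - j))"
    by (auto simp: P_def Ac_def Bc_def)
  also have "card \<dots> = (\<Sum>i=0..n. \<Sum>j=0..m. card (Ac i j) * card (Bc (n - i) (m - j)))"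
  proof -
    have "card (\<Union>j\<in>{0..m}. Ac i j \<times> Bc (n - i) (m - j)) =
        (\<Sum>j=0..m. card (Ac i j) * card (Bc (n - i) (m - j)))" for i
      by (subst card_UN_disjoint) (auto simp: finA finB card_cartesian_product, auto simp: Ac_def)
    then show ?thesis
      by (subst card_UN_disjoint) (auto simp: finA finB, auto simp: Ac_def)
  qed
  finally show "word_gf (conc A B) $ n $ m = (word_gf A * word_gf B) $ n $ m"
    by (simp add: fps_mult_nth fps_sum_nth Ac_def Bc_def)
qed

lemma corr_nth_nth:
  assumes "t < length X"
  shows "corr X Y $ wt (drop (length X - t) X) $ t =
    (if length X - t \<le> length Y \<and> take (length X - t) X = drop (length Y - (length X - t)) Y
     then 1 else 0)"
proof -
  have "corr X Y $ wt (drop (length X - t) X) $ t = (\<Sum>t'<length X. if t' = t then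
      (if length X - t \<le> length Y \<and> take (length X - t) X = drop (length Y - (length X - t)) Y
       then 1 else 0) else 0)"
    unfolding corr_def fps_sum_nth by (rule sum.cong) (auto simp: xq_nth_nth)
  with assms show ?thesis by simp
qed

lemma corr_neq_0_if_overlap:
  assumes "u \<noteq> []" "prefix u X" "suffix u Y"
  shows "corr X Y \<noteq> 0"
proof
  assume corr_0: "corr X Y = 0"
  from assms(2) obtain X' where X: "X = u @ X'" by (auto simp: prefix_def)
  from assms(3) obtain Y' where Y: "Y = Y' @ u" by (auto simp: suffix_def)
  have "corr X Y $ wt (drop (length X - length X') X) $ length X' = 1"
    using corr_nth_nth[of "length X'" X Y] assms(1) by (simp add: X Y)
  with corr_0 show False by simp
qed

definition autocorr_tails :: "nat list \<Rightarrow> nat list set" where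
  "autocorr_tails X = {v. \<exists>u. u \<noteq> [] \<and> suffix u X \<and> X = u @ v}"

lemma corr_self_eq_word_gf: "corr X X = word_gf (autocorr_tails X)"
proof -
  let ?tail = "\<lambda>t. drop (length X - t) X"
  let ?T = "{t\<in>{..<length X}. take (length X - t) X = drop t X}"
  have tails: "autocorr_tails X = ?tail ` ?T"
  proof (intro set_eqI iffI)
    fix v assume "v \<in> autocorr_tails X"
    then obtain u where "u \<noteq> []" "suffix u X" "X = u @ v" by (auto simp: autocorr_tails_def)
    from \<open>suffix u X\<close> obtain z where "X = z @ u" by (auto simp: suffix_def)
    with \<open>X = u @ v\<close> have "length z = length v" by (metis length_append add.commute add_right_cancel)
    with \<open>X = z @ u\<close> have "drop (length v) X = u" by simp
    moreover have "take (length X - length v) X = u" "v = ?tail (length v)" "length v < length X"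
      using \<open>X = u @ v\<close> \<open>u \<noteq> []\<close> by simp_all
    ultimately show "v \<in> ?tail ` ?T" by (intro image_eqI[of _ _ "length v"]) auto
  next
    fix v assume "v \<in> ?tail ` ?T"
    then obtain t where "t < length X" "take (length X - t) X = drop t X" "v = ?tail t" by auto
    define u where "u = take (length X - t) X"
    have "u \<noteq> []" "suffix u X"
      using \<open>t < length X\<close> \<open>take (length X - t) X = drop t X\<close> by (simp_all add: u_def suffix_drop)
    moreover have "X = u @ v"
      using \<open>v = ?tail t\<close> by (simp add: u_def)
    ultimately show "v \<in> autocorr_tails X"
      unfolding autocorr_tails_def by (intro CollectI exI[of _ u]) simp
  qed
  have inj: "inj_on ?tail ?T"
  proof (rule inj_onI)
    fix t t' assume "t \<in> ?T" "t' \<in> ?T" "?tail t = ?tail t'"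
    then have "length (?tail t) = length (?tail t')" by simp
    with \<open>t \<in> ?T\<close> \<open>t' \<in> ?T\<close> show "t = t'" by simp
  qed
  have "word_gf (autocorr_tails X) = (\<Sum>v\<in>?tail ` ?T. xq (wt v) (length v))"
    unfolding tails by (rule word_gf_finite) simp
  also have "\<dots> = (\<Sum>t\<in>?T. xq (wt (?tail t)) (length (?tail t)))"
    by (rule sum.reindex[OF inj, unfolded comp_def])
  also have "\<dots> = (\<Sum>t\<in>?T. xq (wt (?tail t)) t)"
    by (rule sum.cong) auto
  also have "\<dots> = corr X X"
    unfolding corr_def by (subst sum.inter_filter) auto
  finally show ?thesis by simp
qed

lemma autocorr_tails_comp: "is_comp X \<Longrightarrow> autocorr_tails X \<subseteq> Collect is_comp"
  by (auto simp: autocorr_tails_def)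

lemma corr_self_nth_0: "X \<noteq> [] \<Longrightarrow> is_comp X \<Longrightarrow> corr X X $ 0 = 1"
  unfolding corr_self_eq_word_gf
  by (rule word_gf_nth_0[OF autocorr_tails_comp]) (auto simp: autocorr_tails_def)

definition letters :: "nat list set" where
  "letters = {[a] | a. 0 < a}"

lemma word_gf_letters: "word_gf letters = qv * xv * inverse (1 - xv)"
proof -
  have count: "word_gf letters $ n $ m = (if m = 1 \<and> 0 < n then 1 else 0)" for n m
  proof -
    have "{s\<in>letters. wt s = n \<and> length s = m} = (if m = 1 \<and> 0 < n then {[n]} else {})"
      by (auto simp: letters_def wt_def)
    then show ?thesis by simp
  qed
  have "word_gf letters * (1 - xv) = word_gf letters - fps_X * word_gf letters"
    by (simp add: xv_def algebra_simps)
  also have "\<dots> = qv * xv"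
    by (intro fps_ext) (simp add: fps_X_mult_nth count qv_def xv_def del: word_gf_nth_nth)
  finally have "word_gf letters * (1 - xv) = qv * xv" .
  moreover have "(1 - xv) * inverse (1 - xv) = 1"
    by (rule mult_inverse_fps_eq_1) (simp add: xv_def)
  ultimately show ?thesis by (metis mult.assoc mult.right_neutral)
qed

lemma solve_first_hit_equations:
  fixes F L :: "'a::comm_ring_1"
  assumes "1 + F * L = F + (\<Sum>j\<in>J. G j)"
    and "\<And>j. j \<in> J \<Longrightarrow> F * u j = G j * c j"
    and "\<And>j. j \<in> J \<Longrightarrow> c j * c' j = 1"
  shows "F * (1 - L + (\<Sum>j\<in>J. u j * c' j)) = 1"
proof -
  have "F * (u j * c' j) = G j" if "j \<in> J" for j
    using assms(2,3)[OF that] by (metis mult.assoc mult.right_neutral)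
  then have "F * (1 - L + (\<Sum>j\<in>J. u j * c' j)) = F - F * L + (\<Sum>j\<in>J. G j)"
    by (simp add: algebra_simps sum_distrib_left)
  with assms(1) show ?thesis by (simp add: algebra_simps)
qed

lemma avoids_all_sublist: "avoids_all S k s \<Longrightarrow> sublist t s \<Longrightarrow> avoids_all S k t"
  unfolding avoids_all_def by (meson sublist_order.dual_order.trans)

lemma suffix_if_not_avoids_snoc:
  assumes "avoids_all S k s" "\<not> avoids_all S k (s @ [a])"
  obtains i where "i \<in> {1..k}" "suffix (S i) (s @ [a])"
proof -
  from assms(2) obtain i where "i \<in> {1..k}" "sublist (S i) (s @ [a])"
    unfolding avoids_all_def by blast
  moreover from assms(1) \<open>i \<in> {1..k}\<close> have "\<not> sublist (S i) s"
    unfolding avoids_all_def by blast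
  ultimately show thesis using that by (simp add: sublist_snoc)
qed

locale reduced_uncorrelated =
  fixes S :: "nat \<Rightarrow> nat list" and k :: nat
  assumes words: "\<forall>i\<in>{1..k}. S i \<noteq> [] \<and> is_comp (S i)"
    and reduced: "\<forall>i\<in>{1..k}. \<forall>j\<in>{1..k}. i \<noteq> j \<longrightarrow> \<not> sublist (S i) (S j)"
    and uncorr: "\<forall>i\<in>{1..k}. \<forall>j\<in>{1..k}. i \<noteq> j \<longrightarrow> corr (S i) (S j) = 0"
begin

definition avoiders :: "nat list set" where
  "avoiders = {\<sigma>. is_comp \<sigma> \<and> avoids_all S k \<sigma>}"

definition first_hits :: "nat \<Rightarrow> nat list set" where
  "first_hits j = {\<tau>. is_comp \<tau> \<and> suffix (S j) \<tau> \<and> avoids_all S k (butlast \<tau>)}"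

lemma avoids_all_Nil: "avoids_all S k []"
  using words by (auto simp: avoids_all_def)

lemma overlap_same_word:
  assumes "i \<in> {1..k}" "j \<in> {1..k}" "x \<noteq> []" "prefix x (S j)" "suffix (S i) (\<sigma> @ x)"
  shows "i = j"
proof (rule ccontr)
  assume "i \<noteq> j"
  have "suffix x (\<sigma> @ x)" by (rule suffix_appendI) simp
  with assms(5) consider "suffix (S i) x" | "suffix x (S i)"
    using suffix_same_cases by blast
  then show False
  proof cases
    case 1
    have "sublist (S i) (S j)"
      by (rule sublist_order.order.trans[OF suffix_imp_sublist[OF 1] prefix_imp_sublist[OF assms(4)]])
    with reduced[rule_format, OF assms(1,2) \<open>i \<noteq> j\<close>] show False ..
  next
    case 2
    have "corr (S j) (S i) \<noteq> 0" by (rule corr_neq_0_if_overlap[OF assms(3,4) 2])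
    with uncorr[rule_format, OF assms(2,1)] \<open>i \<noteq> j\<close> show False by simp
  qed
qed

lemma disjoint_first_hits: "disjoint_family_on first_hits {1..k}"
  unfolding disjoint_family_on_def
proof (intro ballI impI)
  fix i j assume ij: "i \<in> {1..k}" "j \<in> {1..k}" "i \<noteq> j"
  show "first_hits i \<inter> first_hits j = {}"
  proof (rule ccontr)
    assume "first_hits i \<inter> first_hits j \<noteq> {}"
    then obtain \<tau> where "suffix (S i) \<tau>" "suffix (S j) \<tau>"
      unfolding first_hits_def by blast
    moreover from \<open>suffix (S j) \<tau>\<close> obtain \<sigma> where "\<tau> = \<sigma> @ S j"
      unfolding suffix_def by blast
    ultimately have "suffix (S i) (\<sigma> @ S j)" by simp
    moreover have "S j \<noteq> []" using words ij(2) by blast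
    ultimately have "i = j" using overlap_same_word[OF ij(1,2) _ prefix_order.refl] by blast
    with ij(3) show False ..
  qed
qed

lemma first_hits_prefix_free:
  assumes "j \<in> {1..k}" "\<tau> \<in> first_hits j" "\<tau>' \<in> first_hits j" "prefix \<tau>' \<tau>"
  shows "\<tau>' = \<tau>"
proof (rule ccontr)
  assume "\<tau>' \<noteq> \<tau>"
  from assms(4) obtain z where "\<tau> = \<tau>' @ z" by (auto simp: prefix_def)
  with \<open>\<tau>' \<noteq> \<tau>\<close> have "butlast \<tau> = \<tau>' @ butlast z" by (simp add: butlast_append)
  then have "prefix \<tau>' (butlast \<tau>)" by simp
  moreover have "suffix (S j) \<tau>'" using assms(3) by (simp add: first_hits_def)
  ultimately have "sublist (S j) (butlast \<tau>)"
    using sublist_order.order.trans[OF suffix_imp_sublist prefix_imp_sublist] by blast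
  moreover have "avoids_all S k (butlast \<tau>)" using assms(2) by (simp add: first_hits_def)
  ultimately show False using assms(1) unfolding avoids_all_def by blast
qed

lemma not_avoids_first_hit_prefix:
  "is_comp w \<Longrightarrow> \<not> avoids_all S k w \<Longrightarrow> \<exists>j\<in>{1..k}. \<exists>u\<in>first_hits j. \<exists>v. w = u @ v"
proof (induction w rule: rev_induct)
  case Nil
  with avoids_all_Nil show ?case by simp
next
  case (snoc a w)
  show ?case
  proof (cases "avoids_all S k w")
    case True
    from True snoc.prems(2) obtain j where j: "j \<in> {1..k}" "suffix (S j) (w @ [a])"
      by (rule suffix_if_not_avoids_snoc)
    with True snoc.prems(1) have "w @ [a] \<in> first_hits j"
      by (simp add: first_hits_def)
    with j(1) show ?thesis by (intro bexI exI[of _ "[]"]) simp_all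
  next
    case False
    with snoc.prems(1) snoc.IH obtain j u v where "j \<in> {1..k}" "u \<in> first_hits j" "w = u @ v"
      by auto
    then show ?thesis by (intro bexI exI[of _ "v @ [a]"]) simp_all
  qed
qed

lemma avoiders_comp: "avoiders \<subseteq> Collect is_comp"
  by (auto simp: avoiders_def)

lemma first_hits_comp: "first_hits j \<subseteq> Collect is_comp"
  by (auto simp: first_hits_def)

lemma insert_Nil_conc_avoiders_letters:
  "insert [] (conc avoiders letters) = avoiders \<union> (\<Union>j\<in>{1..k}. first_hits j)"
proof (intro equalityI subsetI)
  fix w assume "w \<in> insert [] (conc avoiders letters)"
  then consider "w = []" | \<sigma> a where "\<sigma> \<in> avoiders" "0 < a" "w = \<sigma> @ [a]"
    by (auto simp: conc_iff letters_def)
  then show "w \<in> avoiders \<union> (\<Union>j\<in>{1..k}. first_hits j)"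
  proof cases
    case 1
    with avoids_all_Nil show ?thesis by (simp add: avoiders_def is_comp_def)
  next
    case 2
    then have "is_comp w" by (simp add: avoiders_def is_comp_def)
    show ?thesis
    proof (cases "avoids_all S k w")
      case True
      with \<open>is_comp w\<close> show ?thesis by (simp add: avoiders_def)
    next
      case False
      with 2 obtain j where "j \<in> {1..k}" "suffix (S j) w"
        using suffix_if_not_avoids_snoc[of S k \<sigma> a] by (auto simp: avoiders_def)
      with 2 \<open>is_comp w\<close> show ?thesis by (auto simp: first_hits_def avoiders_def)
    qed
  qed
next
  fix w assume w: "w \<in> avoiders \<union> (\<Union>j\<in>{1..k}. first_hits j)"
  show "w \<in> insert [] (conc avoiders letters)"
  proof (cases "w = []")
    case False
    from w have "is_comp w" "avoids_all S k (butlast w)"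
      by (auto simp: avoiders_def first_hits_def intro: avoids_all_sublist)
    with False have "butlast w \<in> avoiders" "[last w] \<in> letters"
      by (auto simp: avoiders_def letters_def is_comp_def dest: in_set_butlastD)
    moreover from False have "w = butlast w @ [last w]" by simp
    ultimately show ?thesis by (auto simp: conc_iff)
  qed simp
qed

lemma conc_avoiders_word_subset:
  assumes j: "j \<in> {1..k}"
  shows "conc avoiders {S j} \<subseteq> conc (first_hits j) (autocorr_tails (S j))"
proof
  fix w assume "w \<in> conc avoiders {S j}"
  then obtain \<sigma> where \<sigma>: "\<sigma> \<in> avoiders" and w: "w = \<sigma> @ S j" by (auto simp: conc_iff)
  have "is_comp w" using \<sigma> words j by (simp add: w avoiders_def)
  moreover have "\<not> avoids_all S k w" using j by (auto simp: w avoids_all_def)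
  ultimately obtain i u v where i: "i \<in> {1..k}" "u \<in> first_hits i" "w = u @ v"
    using not_avoids_first_hit_prefix by blast
  have "\<not> prefix u \<sigma>"
  proof
    assume "prefix u \<sigma>"
    moreover from i(2) have "suffix (S i) u" by (simp add: first_hits_def)
    ultimately have "sublist (S i) \<sigma>"
      using sublist_order.order.trans[OF suffix_imp_sublist prefix_imp_sublist] by blast
    with \<sigma> i(1) show False by (auto simp: avoiders_def avoids_all_def)
  qed
  with i(3) w obtain x where u: "u = \<sigma> @ x" and Sj: "S j = x @ v" and "x \<noteq> []"
    by (auto simp: append_eq_append_conv2)
  from i(2) have "suffix (S i) (\<sigma> @ x)" by (simp add: u first_hits_def)
  moreover have "prefix x (S j)" by (simp add: Sj)
  ultimately have "i = j" using overlap_same_word[OF i(1) j \<open>x \<noteq> []\<close>] by blast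
  have "suffix x (S j)"
  proof (rule suffix_length_suffix)
    show "suffix (S j) (\<sigma> @ x)" using \<open>suffix (S i) (\<sigma> @ x)\<close> \<open>i = j\<close> by simp
    show "suffix x (\<sigma> @ x)" by (rule suffix_appendI) simp
    show "length x \<le> length (S j)" by (simp add: Sj)
  qed
  with \<open>x \<noteq> []\<close> have "v \<in> autocorr_tails (S j)"
    unfolding autocorr_tails_def using Sj by blast
  moreover have "u \<in> first_hits j" using i(2) \<open>i = j\<close> by simp
  ultimately show "w \<in> conc (first_hits j) (autocorr_tails (S j))"
    using i(3) by (auto simp: conc_iff)
qed

lemma conc_first_hits_tails_subset:
  "conc (first_hits j) (autocorr_tails (S j)) \<subseteq> conc avoiders {S j}"
proof
  fix w assume "w \<in> conc (first_hits j) (autocorr_tails (S j))"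
  then obtain \<tau> v where \<tau>: "\<tau> \<in> first_hits j" and v: "v \<in> autocorr_tails (S j)" and w: "w = \<tau> @ v"
    by (auto simp: conc_iff)
  from v obtain x where "x \<noteq> []" "suffix x (S j)" and Sj: "S j = x @ v"
    by (auto simp: autocorr_tails_def)
  then obtain y where y: "S j = y @ x" by (auto simp: suffix_def)
  from \<tau> obtain \<rho> where \<rho>: "\<tau> = \<rho> @ S j" by (auto simp: first_hits_def suffix_def)
  have \<tau>_split: "\<tau> = (\<rho> @ y) @ x" by (simp add: \<rho> y)
  have "w = (\<rho> @ y) @ S j"
    unfolding w \<tau>_split Sj by simp
  moreover have "\<rho> @ y \<in> avoiders"
  proof -
    have "prefix (\<rho> @ y) (butlast \<tau>)"
      using \<open>x \<noteq> []\<close> by (simp add: \<tau>_split butlast_append)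
    then have "avoids_all S k (\<rho> @ y)"
      using \<tau> avoids_all_sublist by (auto simp: first_hits_def)
    moreover have "is_comp (\<rho> @ y)"
      using \<tau> \<tau>_split by (simp add: first_hits_def)
    ultimately show ?thesis by (simp add: avoiders_def)
  qed
  ultimately show "w \<in> conc avoiders {S j}" by (auto simp: conc_iff)
qed

lemma word_gf_avoiders_letters:
  "1 + word_gf avoiders * word_gf letters = word_gf avoiders + (\<Sum>j=1..k. word_gf (first_hits j))"
proof -
  have letters_comp: "letters \<subseteq> Collect is_comp" by (auto simp: letters_def is_comp_def)
  have "[] \<notin> conc avoiders letters" by (auto simp: conc_iff letters_def)
  moreover have "conc avoiders letters \<subseteq> Collect is_comp"
    using avoiders_comp letters_comp by (auto simp: conc_iff subset_iff)
  ultimately have "word_gf (insert [] (conc avoiders letters)) = word_gf {[]} + word_gf (conc avoiders letters)"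
    by (subst insert_is_Un, intro word_gf_Un) (auto simp: is_comp_def)
  also have "\<dots> = 1 + word_gf avoiders * word_gf letters"
  proof -
    have "inj_on (\<lambda>(a, b). a @ b) (avoiders \<times> letters)"
      by (rule inj_on_append_const_length[of letters 1]) (auto simp: letters_def)
    then show ?thesis
      by (simp add: word_gf_conc[OF avoiders_comp letters_comp] word_gf_finite xq_def wt_def)
  qed
  finally have "word_gf (insert [] (conc avoiders letters)) = 1 + word_gf avoiders * word_gf letters" .
  moreover have "avoiders \<inter> (\<Union>j\<in>{1..k}. first_hits j) = {}"
    by (auto simp: avoiders_def first_hits_def avoids_all_def)
  then have "word_gf (avoiders \<union> (\<Union>j\<in>{1..k}. first_hits j)) =
      word_gf avoiders + word_gf (\<Union>j\<in>{1..k}. first_hits j)"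
    using avoiders_comp first_hits_comp by (intro word_gf_Un) auto
  moreover have "word_gf (\<Union>j\<in>{1..k}. first_hits j) = (\<Sum>j=1..k. word_gf (first_hits j))"
    by (rule word_gf_UN[OF finite_atLeastAtMost first_hits_comp disjoint_first_hits])
  ultimately show ?thesis using insert_Nil_conc_avoiders_letters by simp
qed

lemma word_gf_avoiders_word:
  assumes j: "j \<in> {1..k}"
  shows "word_gf avoiders * xq (wt (S j)) (length (S j)) = word_gf (first_hits j) * corr (S j) (S j)"
proof -
  have "{S j} \<subseteq> Collect is_comp" using words j by simp
  then have "word_gf avoiders * xq (wt (S j)) (length (S j)) = word_gf (conc avoiders {S j})"
    using word_gf_conc[OF avoiders_comp _ inj_on_append_const_length[of "{S j}"]]
    by (simp add: word_gf_finite)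
  also have "conc avoiders {S j} = conc (first_hits j) (autocorr_tails (S j))"
    using conc_avoiders_word_subset[OF j] conc_first_hits_tails_subset by (rule equalityI)
  also have "word_gf \<dots> = word_gf (first_hits j) * corr (S j) (S j)"
    using word_gf_conc[OF first_hits_comp autocorr_tails_comp inj_on_append_prefix_free]
      first_hits_prefix_free[OF j] words j
    by (simp add: corr_self_eq_word_gf)
  finally show ?thesis .
qed

end

theorem theorem2:
  fixes S :: "nat \<Rightarrow> nat list" and k :: nat
  assumes words: "\<forall>i\<in>{1..k}. S i \<noteq> [] \<and> is_comp (S i)"
    and reduced: "\<forall>i\<in>{1..k}. \<forall>j\<in>{1..k}. i \<noteq> j \<longrightarrow> \<not> sublist (S i) (S j)"
    and uncorr: "\<forall>i\<in>{1..k}. \<forall>j\<in>{1..k}. i \<noteq> j \<longrightarrow> corr (S i) (S j) = 0"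
  shows "avoid_gf S k =
    inverse (1 - qv * xv * inverse (1 - xv)
               + (\<Sum>j=1..k. xq (wt (S j)) (length (S j)) * inverse (corr (S j) (S j))))"
    (is "_ = inverse ?D")
proof -
  interpret reduced_uncorrelated S k using assms by unfold_locales
  have corr_unit: "corr (S j) (S j) * inverse (corr (S j) (S j)) = 1" if "j \<in> {1..k}" for j
    using words that by (intro mult_inverse_fps_eq_1) (simp add: corr_self_nth_0)
  have "word_gf avoiders * ?D = 1"
    using solve_first_hit_equations[OF word_gf_avoiders_letters word_gf_avoiders_word corr_unit]
    by (simp add: word_gf_letters)
  moreover have "?D $ 0 = 1"
    using words by (simp add: fps_sum_nth xq_nth_0 wt_pos xv_def)
  ultimately have "word_gf avoiders = inverse ?D"
    by (intro inverse_fps_unique) simp_all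
  moreover have "avoid_gf S k = word_gf avoiders"
    by (simp add: avoid_gf_def word_gf_def avoiders_def conj_ac)
  ultimately show ?thesis by simp
qed

end
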